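(* If expressions $e_1$ and $e_2$ are compatible, then for every $\sigma\in\Sigma$ and all $m_1,m_2\in\mathcal W(\Sigma)$, the sum $[\![e_1]\!](\sigma)\cdot m_1+[\![e_2]\!](\sigma)\cdot m_2$ is defined (and is an element of $\mathcal W(\Sigma)$).
   Context: $\mathcal A=\langle U,+,\cdot,\mathbf 0,\mathbf 1\rangle$ is a partial semiring ($+$ commutative, associative, possibly partial, unit $\mathbf 0$; $\cdot$ total, associative, unit $\mathbf 1$; two-sided distributivity; $\mathbf 0$ annihilates), naturally ordered ($u\le v$ iff $\exists w.\,u+w=v$ is a partial order), Scott continuous ($+$ and $\cdot$ preserve suprema of directed sets in each argument), with a top element. Infinite sums are suprema of finite partial sums. $\mathcal W(\Sigma)$: maps $m:\Sigma\to U$ with countable support $\mathrm{supp}(m)=\{\sigma:m(\sigma)\neq\mathbf 0\}$ and defined mass $|m|=\sum_{\sigma\in\mathrm{supp}(m)}m(\sigma)$; $u\cdot m$ and $m_1+m_2$ are pointwise. An expression $e$ is either a test $b$ (a Boolean combination of $\mathsf{true},\mathsf{false}$ and primitive tests $t\subseteq\Sigma$, evaluating to $[\![b]\!](\sigma)\in\{\mathbf 0,\mathbf 1\}$ with $[\![t]\!](\sigma)=\mathbf 1$ iff $\sigma\in t$) or a weight $u\in U$ with $[\![u]\!](\sigma)=u$. Expressions $e_1,e_2$ are compatible if $[\![e_1]\!](\sigma)+[\![e_2]\!](\sigma)$ is defined for every $\sigma\in\Sigma$. *)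

theory Defs
  imports Main "HOL-Library.Countable_Set"
begin

definition nat_le :: "('u \<Rightarrow> 'u \<Rightarrow> 'u option) \<Rightarrow> 'u \<Rightarrow> 'u \<Rightarrow> bool" where
  "nat_le pl u v \<longleftrightarrow> (\<exists>w. pl u w = Some v)"

definition is_lub_in :: "('u \<Rightarrow> 'u \<Rightarrow> bool) \<Rightarrow> 'u set \<Rightarrow> 'u \<Rightarrow> bool" where
  "is_lub_in le D s \<longleftrightarrow> (\<forall>x\<in>D. le x s) \<and> (\<forall>b. (\<forall>x\<in>D. le x b) \<longrightarrow> le s b)"

definition directed_in :: "('u \<Rightarrow> 'u \<Rightarrow> bool) \<Rightarrow> 'u set \<Rightarrow> bool" where
  "directed_in le D \<longleftrightarrow> D \<noteq> {} \<and> (\<forall>x\<in>D. \<forall>y\<in>D. \<exists>z\<in>D. le x z \<and> le y z)"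

definition partial_semiring ::
  "('u \<Rightarrow> 'u \<Rightarrow> 'u option) \<Rightarrow> ('u \<Rightarrow> 'u \<Rightarrow> 'u) \<Rightarrow> 'u \<Rightarrow> 'u \<Rightarrow> bool" where
  "partial_semiring pl tm z one \<longleftrightarrow>
     (\<forall>a b. pl a b = pl b a) \<and>
     (\<forall>a b c. Option.bind (pl a b) (\<lambda>x. pl x c) = Option.bind (pl b c) (\<lambda>y. pl a y)) \<and>
     (\<forall>a. pl z a = Some a) \<and>
     (\<forall>a b c. tm (tm a b) c = tm a (tm b c)) \<and>
     (\<forall>a. tm one a = a \<and> tm a one = a) \<and>
     (\<forall>u v w s. pl v w = Some s \<longrightarrow> pl (tm u v) (tm u w) = Some (tm u s)) \<and>
     (\<forall>u v w s. pl v w = Some s \<longrightarrow> pl (tm v u) (tm w u) = Some (tm s u)) \<and>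
     (\<forall>a. tm z a = z \<and> tm a z = z)"

text \<open>Naturally ordered: the natural preorder is a partial order (antisymmetric;
  reflexivity and transitivity are automatic but stated for clarity).\<close>
definition naturally_ordered :: "('u \<Rightarrow> 'u \<Rightarrow> 'u option) \<Rightarrow> bool" where
  "naturally_ordered pl \<longleftrightarrow>
     (\<forall>u. nat_le pl u u) \<and>
     (\<forall>u v w. nat_le pl u v \<longrightarrow> nat_le pl v w \<longrightarrow> nat_le pl u w) \<and>
     (\<forall>u v. nat_le pl u v \<longrightarrow> nat_le pl v u \<longrightarrow> u = v)"

definition scott_continuous ::
  "('u \<Rightarrow> 'u \<Rightarrow> 'u option) \<Rightarrow> ('u \<Rightarrow> 'u \<Rightarrow> 'u) \<Rightarrow> bool" where
  "scott_continuous pl tm \<longleftrightarrow>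
     (\<forall>D. directed_in (nat_le pl) D \<longrightarrow> (\<exists>s. is_lub_in (nat_le pl) D s)) \<and>
     (\<forall>D d u s. directed_in (nat_le pl) D \<longrightarrow> is_lub_in (nat_le pl) D d \<longrightarrow>
        pl u d = Some s \<longrightarrow>
        (\<forall>x\<in>D. pl u x \<noteq> None) \<and> is_lub_in (nat_le pl) ((\<lambda>x. the (pl u x)) ` D) s) \<and>
     (\<forall>D d u. directed_in (nat_le pl) D \<longrightarrow> is_lub_in (nat_le pl) D d \<longrightarrow>
        is_lub_in (nat_le pl) ((\<lambda>x. tm u x) ` D) (tm u d) \<and>
        is_lub_in (nat_le pl) ((\<lambda>x. tm x u) ` D) (tm d u))"

definition has_top :: "('u \<Rightarrow> 'u \<Rightarrow> 'u option) \<Rightarrow> bool" where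
  "has_top pl \<longleftrightarrow> (\<exists>t. \<forall>u. nat_le pl u t)"

definition pcs_semiring ::
  "('u \<Rightarrow> 'u \<Rightarrow> 'u option) \<Rightarrow> ('u \<Rightarrow> 'u \<Rightarrow> 'u) \<Rightarrow> 'u \<Rightarrow> 'u \<Rightarrow> bool" where
  "pcs_semiring pl tm z one \<longleftrightarrow> partial_semiring pl tm z one \<and> naturally_ordered pl
     \<and> scott_continuous pl tm \<and> has_top pl"

text \<open>Finite sums (partial): sum of a list, and of a finite set via some enumeration
  (independent of the enumeration by commutativity/associativity).\<close>
fun lsum :: "('u \<Rightarrow> 'u \<Rightarrow> 'u option) \<Rightarrow> 'u \<Rightarrow> 'u list \<Rightarrow> 'u option" where
  "lsum pl z [] = Some z"
| "lsum pl z (x # xs) = Option.bind (lsum pl z xs) (\<lambda>s. pl x s)"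

definition fsum :: "('u \<Rightarrow> 'u \<Rightarrow> 'u option) \<Rightarrow> 'u \<Rightarrow> ('s \<Rightarrow> 'u) \<Rightarrow> 's set \<Rightarrow> 'u option" where
  "fsum pl z f F = lsum pl z (map f (SOME xs. distinct xs \<and> set xs = F))"

definition supp :: "'u \<Rightarrow> ('s \<Rightarrow> 'u) \<Rightarrow> 's set" where
  "supp z m = {\<sigma>. m \<sigma> \<noteq> z}"

definition has_sum_in :: "('u \<Rightarrow> 'u \<Rightarrow> 'u option) \<Rightarrow> 'u \<Rightarrow> ('s \<Rightarrow> 'u) \<Rightarrow> 's set \<Rightarrow> 'u \<Rightarrow> bool" where
  "has_sum_in pl z f S s \<longleftrightarrow>
     (\<forall>F. finite F \<longrightarrow> F \<subseteq> S \<longrightarrow> fsum pl z f F \<noteq> None) \<and>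
     is_lub_in (nat_le pl) {the (fsum pl z f F) | F. finite F \<and> F \<subseteq> S} s"

definition W :: "('u \<Rightarrow> 'u \<Rightarrow> 'u option) \<Rightarrow> 'u \<Rightarrow> ('s \<Rightarrow> 'u) set" where
  "W pl z = {m. countable (supp z m) \<and> (\<exists>s. has_sum_in pl z m (supp z m) s)}"

datatype 's test = TTrue | TFalse | Prim "'s set" | TNot "'s test"
  | TAnd "'s test" "'s test" | TOr "'s test" "'s test"

fun eval_test :: "'s test \<Rightarrow> 's \<Rightarrow> bool" where
  "eval_test TTrue \<sigma> = True"
| "eval_test TFalse \<sigma> = False"
| "eval_test (Prim t) \<sigma> = (\<sigma> \<in> t)"
| "eval_test (TNot b) \<sigma> = (\<not> eval_test b \<sigma>)"
| "eval_test (TAnd b c) \<sigma> = (eval_test b \<sigma> \<and> eval_test c \<sigma>)"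
| "eval_test (TOr b c) \<sigma> = (eval_test b \<sigma> \<or> eval_test c \<sigma>)"

datatype ('s, 'u) expr = Test "'s test" | Weight 'u

fun eval_expr :: "'u \<Rightarrow> 'u \<Rightarrow> ('s, 'u) expr \<Rightarrow> 's \<Rightarrow> 'u" where
  "eval_expr z one (Test b) \<sigma> = (if eval_test b \<sigma> then one else z)"
| "eval_expr z one (Weight u) \<sigma> = u"

definition compatible ::
  "('u \<Rightarrow> 'u \<Rightarrow> 'u option) \<Rightarrow> 'u \<Rightarrow> 'u \<Rightarrow> ('s, 'u) expr \<Rightarrow> ('s, 'u) expr \<Rightarrow> bool" where
  "compatible pl z one e1 e2 \<longleftrightarrow> (\<forall>\<sigma>. pl (eval_expr z one e1 \<sigma>) (eval_expr z one e2 \<sigma>) \<noteq> None)"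

end

theory Submission
  imports Defs "HOL-Library.Multiset"
begin

text \<open>Since \<open>a + b\<close> is defined, so is \<open>a\<cdot>\<top> + b\<cdot>\<top> = (a + b)\<cdot>\<top>\<close>; definedness of a sum is
  inherited by smaller summands, so \<open>a\<cdot>x + b\<cdot>y\<close> is defined for all \<open>x, y\<close>. This yields the
  pointwise sum \<open>m = a\<cdot>m\<^sub>1 + b\<cdot>m\<^sub>2\<close>, whose support lies in the countable set
  \<open>supp m\<^sub>1 \<union> supp m\<^sub>2\<close>. Every finite partial sum of \<open>m\<close> over \<open>F\<close> equals
  \<open>a\<cdot>(\<Sum>\<^sub>F m\<^sub>1) + b\<cdot>(\<Sum>\<^sub>F m\<^sub>2)\<close>, again defined by the same argument. These partial sums
  grow with \<open>F\<close>, hence form a directed set, whose supremum exists by Scott continuity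
  and is the mass of \<open>m\<close>.\<close>

locale psemiring =
  fixes pl :: "'u \<Rightarrow> 'u \<Rightarrow> 'u option" and tm :: "'u \<Rightarrow> 'u \<Rightarrow> 'u" and z one :: 'u
  assumes partial_semiring: "partial_semiring pl tm z one"
begin

lemma
  shows add_commute: "pl a b = pl b a"
    and add_assoc: "Option.bind (pl a b) (\<lambda>x. pl x c) = Option.bind (pl b c) (\<lambda>y. pl a y)"
    and zero_add: "pl z a = Some a"
    and distrib_left: "pl v w = Some s \<Longrightarrow> pl (tm u v) (tm u w) = Some (tm u s)"
    and distrib_right: "pl v w = Some s \<Longrightarrow> pl (tm v u) (tm w u) = Some (tm s u)"
    and mult_zero_right: "tm a z = z"
  using partial_semiring unfolding partial_semiring_def by blast+

lemma add_reassoc_right: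
  assumes "pl a b = Some ab" "pl ab c = Some r"
  shows "\<exists>bc. pl b c = Some bc \<and> pl a bc = Some r"
  using add_assoc[of a b c] assms by (cases "pl b c") auto

lemma add_reassoc_left:
  assumes "pl b c = Some bc" "pl a bc = Some r"
  shows "\<exists>ab. pl a b = Some ab \<and> pl ab c = Some r"
  using add_assoc[of a b c] assms by (cases "pl a b") auto

lemma add_interchange:
  assumes "pl x X' = Some X" "pl y Y' = Some Y" "pl X Y = Some S" "pl x y = Some xy"
  shows "\<exists>T. pl X' Y' = Some T \<and> pl xy T = Some S"
proof -
  obtain u where u: "pl X' Y = Some u" "pl x u = Some S"
    using add_reassoc_right[OF assms(1,3)] by blast
  obtain v where v: "pl Y' X' = Some v" "pl y v = Some u"
    using add_reassoc_right[OF assms(2)] u(1) add_commute by metis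
  obtain xy' where "pl x y = Some xy'" "pl xy' v = Some S"
    using add_reassoc_left[OF v(2) u(2)] by blast
  with assms(4) v(1) add_commute show ?thesis by (metis option.inject)
qed

lemma add_defined_if_le:
  assumes "pl u' v = Some r" "nat_le pl u u'"
  shows "pl u v \<noteq> None"
proof -
  obtain w where w: "pl u w = Some u'" using assms(2) unfolding nat_le_def by blast
  obtain t where t: "pl w v = Some t" "pl u t = Some r"
    using add_reassoc_right[OF w assms(1)] by blast
  have "pl v w = Some t" using t(1) add_commute by metis
  with add_assoc[of u v w] t(2) show ?thesis by (cases "pl u v") auto
qed

lemma nat_le_mult_left: "nat_le pl u v \<Longrightarrow> nat_le pl (tm a u) (tm a v)"
  using distrib_left unfolding nat_le_def by blast

lemma scaled_add_defined:
  assumes "has_top pl" "pl a b \<noteq> None"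
  shows "pl (tm a x) (tm b y) \<noteq> None"
proof -
  obtain T where T: "\<forall>u. nat_le pl u T" using assms(1) unfolding has_top_def by blast
  obtain s where "pl a b = Some s" using assms(2) by blast
  then have "pl (tm a T) (tm b T) = Some (tm s T)" by (rule distrib_right)
  then have "pl (tm a x) (tm b T) \<noteq> None"
    using add_defined_if_le nat_le_mult_left T by blast
  then obtain r where "pl (tm b T) (tm a x) = Some r" using add_commute by fastforce
  then have "pl (tm b y) (tm a x) \<noteq> None"
    using add_defined_if_le nat_le_mult_left T by blast
  then show ?thesis using add_commute by metis
qed

lemma lsum_swap: "lsum pl z (x # y # xs) = lsum pl z (y # x # xs)"
proof (cases "lsum pl z xs")
  case (Some s)
  with add_assoc[of x y s] add_assoc[of y x s] add_commute[of x y] show ?thesis by simp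
qed simp

lemma lsum_Cons_middle: "lsum pl z (ys @ x # ys') = lsum pl z (x # ys @ ys')"
proof (induction ys)
  case (Cons y ys)
  then have "lsum pl z ((y # ys) @ x # ys') = lsum pl z (y # x # ys @ ys')" by simp
  also have "\<dots> = lsum pl z (x # y # ys @ ys')" by (rule lsum_swap)
  finally show ?case by simp
qed simp

lemma lsum_mset_cong: "mset xs = mset ys \<Longrightarrow> lsum pl z xs = lsum pl z ys"
proof (induction xs arbitrary: ys)
  case (Cons x xs)
  then have "x \<in> set ys" by (metis list.set_intros(1) set_mset_mset)
  then obtain ys1 ys2 where ys: "ys = ys1 @ x # ys2" by (meson split_list)
  with Cons.prems have "mset xs = mset (ys1 @ ys2)" by simp
  then have "lsum pl z xs = lsum pl z (ys1 @ ys2)" by (rule Cons.IH)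
  with ys show ?case by (simp add: lsum_Cons_middle)
qed simp

lemma lsum_append:
  "lsum pl z (xs @ ys) = Option.bind (lsum pl z ys) (\<lambda>t. Option.bind (lsum pl z xs) (\<lambda>s. pl s t))"
proof (induction xs)
  case Nil
  then show ?case using zero_add by (cases "lsum pl z ys") auto
next
  case (Cons x xs)
  then show ?case
    using add_assoc[of x] by (cases "lsum pl z ys"; cases "lsum pl z xs") auto
qed

lemma lsum_filter_nonzero:
  "lsum pl z (map f (filter (\<lambda>x. f x \<noteq> z) xs)) = lsum pl z (map f xs)"
proof (induction xs)
  case (Cons x xs)
  then show ?case using zero_add by (cases "f x = z"; cases "lsum pl z (map f xs)") auto
qed simp

lemma lsum_map_mult_left:
  "lsum pl z (map f xs) = Some X \<Longrightarrow> lsum pl z (map (\<lambda>x. tm a (f x)) xs) = Some (tm a X)"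
proof (induction xs arbitrary: X)
  case (Cons x xs)
  then obtain X' where "lsum pl z (map f xs) = Some X'" "pl (f x) X' = Some X"
    by (cases "lsum pl z (map f xs)") auto
  with Cons.IH distrib_left show ?case by simp
qed (simp add: mult_zero_right)

lemma lsum_map_add:
  assumes h: "\<And>x. pl (f x) (g x) = Some (h x)"
  shows "lsum pl z (map f xs) = Some X \<Longrightarrow> lsum pl z (map g xs) = Some Y \<Longrightarrow>
    pl X Y = Some S \<Longrightarrow> lsum pl z (map h xs) = Some S"
proof (induction xs arbitrary: X Y S)
  case Nil
  then show ?case using zero_add by simp
next
  case (Cons x xs)
  then obtain X' Y' where X': "lsum pl z (map f xs) = Some X'" "pl (f x) X' = Some X"
    and Y': "lsum pl z (map g xs) = Some Y'" "pl (g x) Y' = Some Y"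
    by (auto split: Option.bind_splits)
  obtain T where "pl X' Y' = Some T" "pl (h x) T = Some S"
    using add_interchange[OF X'(2) Y'(2) Cons.prems(3) h] by blast
  with Cons.IH[OF X'(1) Y'(1)] show ?case by simp
qed

lemma fsum_eq_lsum:
  assumes "distinct xs" "set xs = F"
  shows "fsum pl z f F = lsum pl z (map f xs)"
proof -
  define ys where "ys = (SOME xs. distinct xs \<and> set xs = F)"
  have "distinct ys \<and> set ys = F"
    unfolding ys_def using assms by (metis (mono_tags, lifting) someI_ex)
  with assms have "mset (map f ys) = mset (map f xs)"
    by (metis mset_map set_eq_iff_mset_eq_distinct)
  then show ?thesis unfolding fsum_def ys_def[symmetric] by (rule lsum_mset_cong)
qed

lemma fsum_Int_supp:
  assumes "finite F"
  shows "fsum pl z f (F \<inter> supp z f) = fsum pl z f F"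
proof -
  obtain xs where xs: "distinct xs" "set xs = F" using finite_distinct_list[OF assms] by blast
  let ?ys = "filter (\<lambda>x. f x \<noteq> z) xs"
  have "distinct ?ys" "set ?ys = F \<inter> supp z f" using xs unfolding supp_def by auto
  then have "fsum pl z f (F \<inter> supp z f) = lsum pl z (map f ?ys)" by (rule fsum_eq_lsum)
  with xs show ?thesis by (simp add: fsum_eq_lsum lsum_filter_nonzero)
qed

lemma fsum_mult_left:
  assumes "finite F" "fsum pl z f F = Some X"
  shows "fsum pl z (\<lambda>x. tm a (f x)) F = Some (tm a X)"
proof -
  obtain xs where "distinct xs" "set xs = F" using finite_distinct_list[OF assms(1)] by blast
  with assms(2) lsum_map_mult_left show ?thesis by (simp add: fsum_eq_lsum)
qed

lemma fsum_add:
  assumes "\<And>x. pl (f x) (g x) = Some (h x)" "finite F"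
    and "fsum pl z f F = Some X" "fsum pl z g F = Some Y" "pl X Y = Some S"
  shows "fsum pl z h F = Some S"
proof -
  obtain xs where "distinct xs" "set xs = F" using finite_distinct_list[OF assms(2)] by blast
  with assms lsum_map_add[of f g h] show ?thesis by (simp add: fsum_eq_lsum)
qed

lemma fsum_mono_set:
  assumes "finite G" "F \<subseteq> G" "fsum pl z f G = Some g"
  shows "\<exists>s. fsum pl z f F = Some s \<and> nat_le pl s g"
proof -
  obtain xs where xs: "distinct xs" "set xs = F"
    using finite_distinct_list finite_subset assms(1,2) by metis
  obtain ys where ys: "distinct ys" "set ys = G - F"
    using finite_distinct_list assms(1) by (meson finite_Diff)
  have "distinct (xs @ ys)" "set (xs @ ys) = G" using xs ys assms(2) by auto
  with assms(3) have "Some g = Option.bind (lsum pl z (map f ys))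
      (\<lambda>t. Option.bind (lsum pl z (map f xs)) (\<lambda>s. pl s t))"
    using fsum_eq_lsum lsum_append by (metis map_append)
  then obtain t s where "lsum pl z (map f xs) = Some s" "pl s t = Some g"
    by (auto split: Option.bind_splits)
  with xs show ?thesis unfolding nat_le_def by (auto simp: fsum_eq_lsum)
qed

lemma has_sum_in_if_fsum_defined:
  assumes "scott_continuous pl tm"
    and defined: "\<And>F. finite F \<Longrightarrow> F \<subseteq> S \<Longrightarrow> fsum pl z f F \<noteq> None"
  shows "\<exists>s. has_sum_in pl z f S s"
proof -
  define D where "D = {the (fsum pl z f F) | F. finite F \<and> F \<subseteq> S}"
  have "directed_in (nat_le pl) D"
    unfolding directed_in_def
  proof (intro conjI ballI)
    show "D \<noteq> {}" unfolding D_def by blast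
  next
    fix x y assume "x \<in> D" "y \<in> D"
    then obtain F G where FG: "x = the (fsum pl z f F)" "y = the (fsum pl z f G)"
      "finite F" "finite G" "F \<subseteq> S" "G \<subseteq> S" unfolding D_def by blast
    have FG_fin: "finite (F \<union> G)" "F \<union> G \<subseteq> S" using FG by auto
    then obtain g where g: "fsum pl z f (F \<union> G) = Some g" using defined by blast
    then have "g = the (fsum pl z f (F \<union> G))" by simp
    with FG_fin have "g \<in> D" unfolding D_def by blast
    moreover have "nat_le pl x g" using fsum_mono_set[OF FG_fin(1) _ g, of F] FG by auto
    moreover have "nat_le pl y g" using fsum_mono_set[OF FG_fin(1) _ g, of G] FG by auto
    ultimately show "\<exists>w\<in>D. nat_le pl x w \<and> nat_le pl y w" by blast
  qed
  with assms(1) obtain s where "is_lub_in (nat_le pl) D s"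
    unfolding scott_continuous_def by blast
  with defined show ?thesis unfolding has_sum_in_def D_def by blast
qed

lemma W_fsum_defined:
  assumes "m \<in> W pl z" "finite F"
  shows "fsum pl z m F \<noteq> None"
proof -
  from assms(1) obtain s where "has_sum_in pl z m (supp z m) s" unfolding W_def by blast
  then have "fsum pl z m (F \<inter> supp z m) \<noteq> None" using assms(2) unfolding has_sum_in_def by blast
  with fsum_Int_supp[OF assms(2)] show ?thesis by simp
qed

lemma supp_scaled_add_subset:
  assumes "\<And>x. pl (tm a (m1 x)) (tm b (m2 x)) = Some (m x)"
  shows "supp z m \<subseteq> supp z m1 \<union> supp z m2"
proof
  fix x assume "x \<in> supp z m"
  moreover have "m x = z" if "m1 x = z" "m2 x = z"
    using assms[of x] that by (simp add: mult_zero_right zero_add)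
  ultimately show "x \<in> supp z m1 \<union> supp z m2" unfolding supp_def by blast
qed

lemma W_scaled_add:
  assumes "scott_continuous pl tm" "has_top pl" "pl a b \<noteq> None"
    and "m1 \<in> W pl z" "m2 \<in> W pl z"
    and m: "\<And>x. pl (tm a (m1 x)) (tm b (m2 x)) = Some (m x)"
  shows "m \<in> W pl z"
proof -
  have defined: "fsum pl z m F \<noteq> None" if F: "finite F" for F
  proof -
    obtain X1 X2 where "fsum pl z m1 F = Some X1" "fsum pl z m2 F = Some X2"
      using W_fsum_defined[OF assms(4) F] W_fsum_defined[OF assms(5) F] by auto
    then have "fsum pl z (\<lambda>x. tm a (m1 x)) F = Some (tm a X1)"
      "fsum pl z (\<lambda>x. tm b (m2 x)) F = Some (tm b X2)"
      using fsum_mult_left[OF F] by simp_all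
    moreover obtain S where "pl (tm a X1) (tm b X2) = Some S"
      using scaled_add_defined[OF assms(2,3)] by auto
    ultimately show ?thesis using fsum_add[OF m F] by simp
  qed
  have "countable (supp z m1 \<union> supp z m2)" using assms(4,5) unfolding W_def by auto
  then have "countable (supp z m)" by (rule countable_subset[OF supp_scaled_add_subset[OF m]])
  moreover have "\<exists>s. has_sum_in pl z m (supp z m) s"
    by (rule has_sum_in_if_fsum_defined[OF assms(1)]) (simp add: defined)
  ultimately show ?thesis unfolding W_def by blast
qed

end

theorem lemmaA7:
  fixes pl :: "'u \<Rightarrow> 'u \<Rightarrow> 'u option" and tm :: "'u \<Rightarrow> 'u \<Rightarrow> 'u"
    and z one :: 'u and e1 e2 :: "('s, 'u) expr"
  assumes "pcs_semiring pl tm z one"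
    and "compatible pl z one e1 e2"
  shows "\<forall>\<sigma> (m1::'s \<Rightarrow> 'u) (m2::'s \<Rightarrow> 'u). m1 \<in> W pl z \<longrightarrow> m2 \<in> W pl z \<longrightarrow>
           (\<exists>m \<in> W pl z. \<forall>\<sigma>'. pl (tm (eval_expr z one e1 \<sigma>) (m1 \<sigma>'))
                                   (tm (eval_expr z one e2 \<sigma>) (m2 \<sigma>')) = Some (m \<sigma>'))"
proof (intro allI impI)
  fix \<sigma> and m1 m2 :: "'s \<Rightarrow> 'u"
  assume W: "m1 \<in> W pl z" "m2 \<in> W pl z"
  have ps: "partial_semiring pl tm z one" and top: "has_top pl" and sc: "scott_continuous pl tm"
    using assms(1) unfolding pcs_semiring_def by auto
  interpret psemiring pl tm z one by (rule psemiring.intro[OF ps])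
  let ?a = "eval_expr z one e1 \<sigma>" and ?b = "eval_expr z one e2 \<sigma>"
  have "pl ?a ?b \<noteq> None" using assms(2) unfolding compatible_def by blast
  then have "\<forall>x. \<exists>s. pl (tm ?a (m1 x)) (tm ?b (m2 x)) = Some s"
    using scaled_add_defined[OF top] by auto
  then obtain m where "\<And>x. pl (tm ?a (m1 x)) (tm ?b (m2 x)) = Some (m x)" by metis
  with W_scaled_add[OF sc top \<open>pl ?a ?b \<noteq> None\<close> W] show "\<exists>m \<in> W pl z. \<forall>\<sigma>'.
      pl (tm ?a (m1 \<sigma>')) (tm ?b (m2 \<sigma>')) = Some (m \<sigma>')" by blast
qed

end
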